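(* Let $\mathbb{R}^{\mathbb{N}}_B$ be the ring of bounded real sequences, let $o=\{f\in\mathbb{R}^{\mathbb{N}}: \lim_{n\to\infty} n f(n)=0\}$, and let $\mathbb{R}_{\mathcal F}^{\circ}=\mathbb{R}^{\mathbb{N}}_B/o$. Then: (1) $\mathbb{R}_{\mathcal F}^{\circ}$ is a partially ordered ring; (2) there are nonzero infinitesimals in $\mathbb{R}_{\mathcal F}^{\circ}$; (3) $\mathbb{R}_{\mathcal F}^{\circ}$ has nonzero nilpotent elements and, as a consequence, it has zero-divisors.
   Context: $o$ is an ideal of the ring $\mathbb{R}^{\mathbb{N}}_B$ (pointwise operations). Elements of the quotient are classes $[x]_o$ with operations $[x]_o+[y]_o=[x+y]_o$, $[x]_o[y]_o=[xy]_o$, and order $[x]_o\le_o[y]_o$ iff there exist $z\in o$ and $\bar n\in\mathbb{N}$ with $x_n\le y_n+z_n$ for all $n\ge\bar n$. The reals embed via constant sequences. For an ordered ring $R\supseteq\mathbb{R}$, an element $r\in R$ is infinitesimal iff $-1/n\le r\le 1/n$ for all $n\in\mathbb{N}$. *)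

theory Defs
  imports Complex_Main "HOL-Algebra.QuotRing"
begin

definition BR :: "(nat \<Rightarrow> real) ring" where
  "BR = \<lparr>carrier = {f. Bseq f},
         mult = (\<lambda>x y n. x n * y n),
         one = (\<lambda>n. 1),
         zero = (\<lambda>n. 0),
         add = (\<lambda>x y n. x n + y n)\<rparr>"

definition o_ideal :: "(nat \<Rightarrow> real) set" where
  "o_ideal = {f. (\<lambda>n. real n * f n) \<longlonglongrightarrow> 0}"

definition RFo :: "(nat \<Rightarrow> real) set ring" where
  "RFo = BR Quot o_ideal"

definition le_o :: "(nat \<Rightarrow> real) set \<Rightarrow> (nat \<Rightarrow> real) set \<Rightarrow> bool" where
  "le_o X Y \<longleftrightarrow> (\<exists>x\<in>X. \<exists>y\<in>Y. \<exists>z\<in>o_ideal. \<exists>nb::nat. \<forall>n\<ge>nb. x n \<le> y n + z n)"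

definition embed_o :: "real \<Rightarrow> (nat \<Rightarrow> real) set" where
  "embed_o c = o_ideal +>\<^bsub>BR\<^esub> (\<lambda>n. c)"

definition partially_ordered_ring :: "('a, 'm) ring_scheme \<Rightarrow> ('a \<Rightarrow> 'a \<Rightarrow> bool) \<Rightarrow> bool" where
  "partially_ordered_ring R leq \<longleftrightarrow>
     ring R \<and>
     (\<forall>x\<in>carrier R. leq x x) \<and>
     (\<forall>x\<in>carrier R. \<forall>y\<in>carrier R. leq x y \<and> leq y x \<longrightarrow> x = y) \<and>
     (\<forall>x\<in>carrier R. \<forall>y\<in>carrier R. \<forall>z\<in>carrier R. leq x y \<and> leq y z \<longrightarrow> leq x z) \<and>
     (\<forall>x\<in>carrier R. \<forall>y\<in>carrier R. \<forall>z\<in>carrier R. leq x y \<longrightarrow> leq (x \<oplus>\<^bsub>R\<^esub> z) (y \<oplus>\<^bsub>R\<^esub> z)) \<and>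
     (\<forall>x\<in>carrier R. \<forall>y\<in>carrier R. leq \<zero>\<^bsub>R\<^esub> x \<and> leq \<zero>\<^bsub>R\<^esub> y \<longrightarrow> leq \<zero>\<^bsub>R\<^esub> (x \<otimes>\<^bsub>R\<^esub> y))"

definition infinitesimal_o :: "(nat \<Rightarrow> real) set \<Rightarrow> bool" where
  "infinitesimal_o r \<longleftrightarrow>
     (\<forall>n::nat. n \<ge> 1 \<longrightarrow> le_o (embed_o (- 1 / real n)) r \<and> le_o r (embed_o (1 / real n)))"

end

theory Submission imports Defs begin

text \<open>The quotient is a ring because o is an ideal of the bounded sequences: if n f(n) \<rightarrow> 0
  then f is bounded, and n f(n) g(n) \<rightarrow> 0 for bounded g. The order is well defined on classes since
  o absorbs the representatives, and it is antisymmetric because [a] \<le> [b] \<le> [a] squeezes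
  n (a(n) - b(n)) between two null sequences. The class of e(n) = 1/(n+1) witnesses the remaining
  claims: it is nonzero since n e(n) \<rightarrow> 1, its square vanishes since n e(n)^2 \<le> e(n) \<rightarrow> 0,
  and 0 \<le> e(n) \<le> 1/m for n \<ge> m makes it infinitesimal.\<close>

lemma carrier_BR [simp]: "carrier BR = {f. Bseq f}"
  and add_BR [simp]: "x \<oplus>\<^bsub>BR\<^esub> y = (\<lambda>n. x n + y n)"
  and mult_BR [simp]: "x \<otimes>\<^bsub>BR\<^esub> y = (\<lambda>n. x n * y n)"
  and zero_BR [simp]: "\<zero>\<^bsub>BR\<^esub> = (\<lambda>n. 0)"
  and one_BR [simp]: "\<one>\<^bsub>BR\<^esub> = (\<lambda>n. 1)"
  by (simp_all add: BR_def)

lemma Bseq_add_Bseq: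
  fixes f g :: "nat \<Rightarrow> real"
  assumes "Bseq f" "Bseq g"
  shows "Bseq (\<lambda>n. f n + g n)"
proof -
  obtain K L where "\<And>n. norm (f n) \<le> K" "\<And>n. norm (g n) \<le> L"
    using assms unfolding Bseq_def by blast
  then have "norm (f n + g n) \<le> K + L" for n
    by (smt (verit) norm_triangle_ineq)
  then show ?thesis by (rule BseqI')
qed

lemma ring_BR: "ring BR"
proof (rule ringI)
  show "abelian_group BR"
  proof (rule abelian_groupI)
    fix x assume "x \<in> carrier BR"
    then show "\<exists>y \<in> carrier BR. y \<oplus>\<^bsub>BR\<^esub> x = \<zero>\<^bsub>BR\<^esub>"
      by (intro bexI[of _ "\<lambda>n. - x n"]) (simp_all add: Bseq_minus_iff)
  qed (simp_all add: Bseq_add_Bseq add_ac)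
  show "monoid BR"
    by (rule monoidI) (simp_all add: Bseq_mult mult.assoc)
qed (simp_all add: distrib_left distrib_right)

lemma a_inv_BR: "f \<in> carrier BR \<Longrightarrow> \<ominus>\<^bsub>BR\<^esub> f = (\<lambda>n. - f n)"
  by (rule abelian_group.minus_equality[OF ring.is_abelian_group[OF ring_BR]])
    (auto simp: Bseq_minus_iff)

lemma o_ideal_iff: "f \<in> o_ideal \<longleftrightarrow> (\<lambda>n. real n * f n) \<longlonglongrightarrow> 0"
  by (simp add: o_ideal_def)

lemma o_ideal_zero: "(\<lambda>n. 0) \<in> o_ideal"
  by (simp add: o_ideal_iff)

lemma o_ideal_add: "f \<in> o_ideal \<Longrightarrow> g \<in> o_ideal \<Longrightarrow> (\<lambda>n. f n + g n) \<in> o_ideal"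
  unfolding o_ideal_iff distrib_left by (rule tendsto_add_zero)

lemma o_ideal_uminus: "f \<in> o_ideal \<Longrightarrow> (\<lambda>n. - f n) \<in> o_ideal"
  unfolding o_ideal_iff using tendsto_minus[of _ 0] by fastforce

lemma o_ideal_Bseq:
  assumes "f \<in> o_ideal"
  shows "Bseq f"
proof -
  have "Bseq (\<lambda>n. real n * f n)"
    using assms convergent_imp_Bseq convergentI unfolding o_ideal_iff by blast
  then obtain K where K: "\<And>n. norm (real n * f n) \<le> K"
    unfolding Bseq_def by blast
  have "norm (f n) \<le> max (norm (f 0)) K" for n
  proof (cases n)
    case (Suc m)
    then have "norm (f n) \<le> norm (real n * f n)"
      by (simp add: abs_mult mult_le_cancel_right1)
    with K[of n] show ?thesis by simp
  qed simp
  then show ?thesis by (rule BseqI')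
qed

lemma o_ideal_mult_Bseq:
  assumes "f \<in> o_ideal" "Bseq g"
  shows "(\<lambda>n. f n * g n) \<in> o_ideal"
proof -
  have "Zfun (\<lambda>n. real n * f n * g n) sequentially"
    using bounded_bilinear.Zfun_prod_Bfun[OF bounded_bilinear_mult] assms
    unfolding o_ideal_iff tendsto_Zfun_iff by simp
  then show ?thesis
    unfolding o_ideal_iff tendsto_Zfun_iff by (simp add: mult.assoc)
qed

lemma o_ideal_sandwich:
  assumes "v \<in> o_ideal" "w \<in> o_ideal"
    and "eventually (\<lambda>n. - v n \<le> d n \<and> d n \<le> w n) sequentially"
  shows "d \<in> o_ideal"
  unfolding o_ideal_iff
proof (rule tendsto_sandwich)
  show "eventually (\<lambda>n. - (real n * v n) \<le> real n * d n) sequentially"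
    using assms(3) by (auto elim!: eventually_mono dest: mult_left_mono[of _ _ "real n" for n])
  show "eventually (\<lambda>n. real n * d n \<le> real n * w n) sequentially"
    using assms(3) by (auto elim!: eventually_mono intro: mult_left_mono)
  show "(\<lambda>n. - (real n * v n)) \<longlonglongrightarrow> 0" "(\<lambda>n. real n * w n) \<longlonglongrightarrow> 0"
    using assms(1,2) o_ideal_uminus[of v] by (simp_all add: o_ideal_iff)
qed

lemma ideal_o_ideal: "ideal o_ideal BR"
proof (rule idealI[OF ring_BR])
  interpret ring BR by (rule ring_BR)
  show "subgroup o_ideal (add_monoid BR)"
  proof (rule add.subgroupI)
    show "o_ideal \<subseteq> carrier BR" "o_ideal \<noteq> {}"
      using o_ideal_Bseq o_ideal_zero by auto
  qed (simp_all add: a_inv_BR o_ideal_Bseq o_ideal_uminus o_ideal_add)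
next
  fix a x assume "a \<in> o_ideal" "x \<in> carrier BR"
  then show "x \<otimes>\<^bsub>BR\<^esub> a \<in> o_ideal" "a \<otimes>\<^bsub>BR\<^esub> x \<in> o_ideal"
    using o_ideal_mult_Bseq[of a x] by (simp_all add: mult.commute)
qed

definition o_class :: "(nat \<Rightarrow> real) \<Rightarrow> (nat \<Rightarrow> real) set" where
  "o_class a = o_ideal +>\<^bsub>BR\<^esub> a"

lemma o_class_eq: "o_class a = {(\<lambda>n. h n + a n) | h. h \<in> o_ideal}"
  unfolding o_class_def a_r_coset_def' by auto

lemma o_class_self: "a \<in> o_class a"
  unfolding o_class_eq using o_ideal_zero by force

lemma o_class_eq_iff: "o_class a = o_class b \<longleftrightarrow> (\<lambda>n. a n - b n) \<in> o_ideal"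
proof
  assume "o_class a = o_class b"
  then obtain h where "h \<in> o_ideal" "a = (\<lambda>n. h n + b n)"
    using o_class_self[of a] unfolding o_class_eq by auto
  then show "(\<lambda>n. a n - b n) \<in> o_ideal" by simp
next
  assume diff: "(\<lambda>n. a n - b n) \<in> o_ideal"
  have shift: "o_class a \<subseteq> o_class b" if "(\<lambda>n. a n - b n) \<in> o_ideal" for a b
  proof
    fix x assume "x \<in> o_class a"
    then obtain h where "h \<in> o_ideal" "x = (\<lambda>n. h n + a n)" unfolding o_class_eq by auto
    with o_ideal_add[OF _ that] show "x \<in> o_class b"
      unfolding o_class_eq by (intro CollectI exI[of _ "\<lambda>n. h n + (a n - b n)"]) auto
  qed
  have "(\<lambda>n. b n - a n) \<in> o_ideal"
    using o_ideal_uminus[OF diff] by simp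
  with shift[OF diff] shift show "o_class a = o_class b" by blast
qed

lemma carrier_RFo: "carrier RFo = {o_class a | a. Bseq a}"
  unfolding RFo_def FactRing_def A_RCOSETS_def' o_class_def by auto

lemma zero_RFo: "\<zero>\<^bsub>RFo\<^esub> = o_class (\<lambda>n. 0)"
  unfolding RFo_def FactRing_def o_class_eq by auto

lemma embed_o_eq: "embed_o c = o_class (\<lambda>n. c)"
  unfolding embed_o_def o_class_def ..

lemma add_RFo: "Bseq a \<Longrightarrow> Bseq b \<Longrightarrow> o_class a \<oplus>\<^bsub>RFo\<^esub> o_class b = o_class (\<lambda>n. a n + b n)"
  using ideal.a_rcos_sum[OF ideal_o_ideal, of a b]
  by (simp add: RFo_def FactRing_def o_class_def)

lemma mult_RFo: "Bseq a \<Longrightarrow> Bseq b \<Longrightarrow> o_class a \<otimes>\<^bsub>RFo\<^esub> o_class b = o_class (\<lambda>n. a n * b n)"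
  using ideal.rcoset_mult_add[OF ideal_o_ideal, of a b]
  by (simp add: RFo_def FactRing_def o_class_def)

lemma ring_RFo: "ring RFo"
  unfolding RFo_def by (rule ideal.quotient_is_ring[OF ideal_o_ideal])

lemma le_o_class_iff:
  "le_o (o_class a) (o_class b) \<longleftrightarrow>
     (\<exists>w\<in>o_ideal. eventually (\<lambda>n. a n \<le> b n + w n) sequentially)"
proof
  assume "le_o (o_class a) (o_class b)"
  then obtain x y z nb where "x \<in> o_class a" "y \<in> o_class b" "z \<in> o_ideal"
    and le: "\<forall>n\<ge>nb. x n \<le> y n + z n" unfolding le_o_def by blast
  then obtain h k where h: "h \<in> o_ideal" "x = (\<lambda>n. h n + a n)"
    and k: "k \<in> o_ideal" "y = (\<lambda>n. k n + b n)" unfolding o_class_eq by auto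
  define w where "w n = k n + z n + - h n" for n
  have "w \<in> o_ideal"
    unfolding w_def using h k \<open>z \<in> o_ideal\<close> by (intro o_ideal_add o_ideal_uminus)
  moreover have "eventually (\<lambda>n. a n \<le> b n + w n) sequentially"
    unfolding eventually_sequentially w_def using le h k by (intro exI[of _ nb]) force
  ultimately show "\<exists>w\<in>o_ideal. eventually (\<lambda>n. a n \<le> b n + w n) sequentially" by blast
next
  assume "\<exists>w\<in>o_ideal. eventually (\<lambda>n. a n \<le> b n + w n) sequentially"
  then show "le_o (o_class a) (o_class b)"
    unfolding le_o_def eventually_sequentially using o_class_self by blast
qed

lemma le_o_class_mono:
  assumes "eventually (\<lambda>n. a n \<le> b n) sequentially"
  shows "le_o (o_class a) (o_class b)"
  using assms o_ideal_zero unfolding le_o_class_iff by force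

lemma le_o_class_antisym:
  assumes "le_o (o_class a) (o_class b)" "le_o (o_class b) (o_class a)"
  shows "o_class a = o_class b"
proof -
  obtain v w where "v \<in> o_ideal" "w \<in> o_ideal"
    and ev: "eventually (\<lambda>n. b n \<le> a n + v n) sequentially"
            "eventually (\<lambda>n. a n \<le> b n + w n) sequentially"
    using assms unfolding le_o_class_iff by blast
  have "eventually (\<lambda>n. - v n \<le> a n - b n \<and> a n - b n \<le> w n) sequentially"
    using ev by eventually_elim auto
  with \<open>v \<in> o_ideal\<close> \<open>w \<in> o_ideal\<close> have "(\<lambda>n. a n - b n) \<in> o_ideal"
    by (rule o_ideal_sandwich)
  then show ?thesis by (simp add: o_class_eq_iff)
qed

lemma le_o_class_trans:
  assumes "le_o (o_class a) (o_class b)" "le_o (o_class b) (o_class c)"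
  shows "le_o (o_class a) (o_class c)"
proof -
  obtain v w where "v \<in> o_ideal" "w \<in> o_ideal"
    and ev: "eventually (\<lambda>n. a n \<le> b n + v n) sequentially"
            "eventually (\<lambda>n. b n \<le> c n + w n) sequentially"
    using assms unfolding le_o_class_iff by blast
  have "eventually (\<lambda>n. a n \<le> c n + (v n + w n)) sequentially"
    using ev by eventually_elim auto
  with \<open>v \<in> o_ideal\<close> \<open>w \<in> o_ideal\<close> show ?thesis
    unfolding le_o_class_iff by (intro bexI[of _ "\<lambda>n. v n + w n"] o_ideal_add)
qed

lemma le_o_class_add_right:
  "le_o (o_class a) (o_class b) \<Longrightarrow> le_o (o_class (\<lambda>n. a n + c n)) (o_class (\<lambda>n. b n + c n))"
  unfolding le_o_class_iff by (auto elim!: eventually_mono[rotated])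

lemma le_o_class_mult_nonneg:
  assumes "Bseq a" "Bseq b"
    and "le_o (o_class (\<lambda>n. 0)) (o_class a)" "le_o (o_class (\<lambda>n. 0)) (o_class b)"
  shows "le_o (o_class (\<lambda>n. 0)) (o_class (\<lambda>n. a n * b n))"
proof -
  obtain v w where v: "v \<in> o_ideal" and w: "w \<in> o_ideal"
    and ev: "eventually (\<lambda>n. 0 \<le> a n + v n) sequentially"
            "eventually (\<lambda>n. 0 \<le> b n + w n) sequentially"
    using assms(3,4) unfolding le_o_class_iff by auto
  have "eventually (\<lambda>n. 0 \<le> a n * b n + (w n * a n + v n * b n + v n * w n)) sequentially"
    using ev
  proof eventually_elim
    case (elim n)
    then have "0 \<le> (a n + v n) * (b n + w n)" by simp
    then show ?case by (simp add: algebra_simps)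
  qed
  moreover have "(\<lambda>n. w n * a n + v n * b n + v n * w n) \<in> o_ideal"
    using v w assms(1,2) by (simp add: o_ideal_add o_ideal_mult_Bseq o_ideal_Bseq)
  ultimately show ?thesis
    unfolding le_o_class_iff by (intro bexI[of _ "\<lambda>n. w n * a n + v n * b n + v n * w n"]) simp_all
qed

lemma partially_ordered_ring_RFo: "partially_ordered_ring RFo le_o"
proof -
  have classes: "(\<forall>X\<in>carrier RFo. P X) \<longleftrightarrow> (\<forall>a. Bseq a \<longrightarrow> P (o_class a))" for P
    by (auto simp: carrier_RFo)
  show ?thesis
    unfolding partially_ordered_ring_def classes zero_RFo
  proof (intro conjI ring_RFo allI impI; (elim conjE)?)
    fix a b c :: "nat \<Rightarrow> real"
    assume "Bseq a" "Bseq b" "Bseq c"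
    show "le_o (o_class a) (o_class a)"
      by (rule le_o_class_mono) simp
    show "o_class a = o_class b" if "le_o (o_class a) (o_class b)" "le_o (o_class b) (o_class a)"
      using that by (rule le_o_class_antisym)
    show "le_o (o_class a) (o_class c)" if "le_o (o_class a) (o_class b)" "le_o (o_class b) (o_class c)"
      using that by (rule le_o_class_trans)
    show "le_o (o_class a \<oplus>\<^bsub>RFo\<^esub> o_class c) (o_class b \<oplus>\<^bsub>RFo\<^esub> o_class c)"
      if "le_o (o_class a) (o_class b)"
      using le_o_class_add_right[OF that] by (simp add: add_RFo \<open>Bseq a\<close> \<open>Bseq b\<close> \<open>Bseq c\<close>)
  next
    fix a b :: "nat \<Rightarrow> real"
    assume "Bseq a" "Bseq b"
      "le_o (o_class (\<lambda>n. 0)) (o_class a)" "le_o (o_class (\<lambda>n. 0)) (o_class b)"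
    then show "le_o (o_class (\<lambda>n. 0)) (o_class a \<otimes>\<^bsub>RFo\<^esub> o_class b)"
      by (simp add: mult_RFo le_o_class_mult_nonneg)
  qed
qed

definition recip_Suc :: "nat \<Rightarrow> real" where
  "recip_Suc n = inverse (real (Suc n))"

lemma Bseq_recip_Suc: "Bseq recip_Suc"
  by (rule BseqI'[of _ 1]) (simp add: recip_Suc_def inverse_le_1_iff)

lemma recip_Suc_not_in_o_ideal: "recip_Suc \<notin> o_ideal"
proof
  assume "recip_Suc \<in> o_ideal"
  then have "(\<lambda>n. real n / real (Suc n)) \<longlonglongrightarrow> 0"
    by (simp add: o_ideal_iff recip_Suc_def divide_inverse)
  with LIMSEQ_n_over_Suc_n show False
    using LIMSEQ_unique by fastforce
qed

lemma recip_Suc_squared_in_o_ideal: "(\<lambda>n. recip_Suc n * recip_Suc n) \<in> o_ideal"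
  unfolding o_ideal_iff
proof (rule tendsto_sandwich[OF _ _ tendsto_const])
  show "eventually (\<lambda>n. 0 \<le> real n * (recip_Suc n * recip_Suc n)) sequentially"
    by (simp add: recip_Suc_def)
  have "real n * recip_Suc n * recip_Suc n \<le> 1 * recip_Suc n" for n
    by (rule mult_right_mono) (simp_all add: recip_Suc_def field_simps)
  then show "eventually (\<lambda>n. real n * (recip_Suc n * recip_Suc n) \<le> recip_Suc n) sequentially"
    by (simp add: mult.assoc)
  show "recip_Suc \<longlonglongrightarrow> 0"
    unfolding recip_Suc_def by (rule LIMSEQ_inverse_real_of_nat)
qed

lemma infinitesimal_o_recip_Suc: "infinitesimal_o (o_class recip_Suc)"
  unfolding infinitesimal_o_def embed_o_eq
proof (intro allI impI conjI le_o_class_mono)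
  fix m :: nat assume "1 \<le> m"
  show "eventually (\<lambda>n. - 1 / real m \<le> recip_Suc n) sequentially"
    by (simp add: recip_Suc_def order.trans[of _ 0])
  have "recip_Suc n \<le> 1 / real m" if "m \<le> n" for n
    using that \<open>1 \<le> m\<close> by (simp add: recip_Suc_def inverse_eq_divide frac_le)
  then show "eventually (\<lambda>n. recip_Suc n \<le> 1 / real m) sequentially"
    unfolding eventually_sequentially by blast
qed

theorem mainTheorem2:
  shows "partially_ordered_ring RFo le_o
    \<and> (\<exists>r\<in>carrier RFo. r \<noteq> \<zero>\<^bsub>RFo\<^esub> \<and> infinitesimal_o r)
    \<and> (\<exists>x\<in>carrier RFo. x \<noteq> \<zero>\<^bsub>RFo\<^esub> \<and> (\<exists>k::nat. x [^]\<^bsub>RFo\<^esub> k = \<zero>\<^bsub>RFo\<^esub>))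
    \<and> (\<exists>x\<in>carrier RFo. \<exists>y\<in>carrier RFo. x \<noteq> \<zero>\<^bsub>RFo\<^esub> \<and> y \<noteq> \<zero>\<^bsub>RFo\<^esub>
         \<and> x \<otimes>\<^bsub>RFo\<^esub> y = \<zero>\<^bsub>RFo\<^esub>)"
proof -
  interpret RFo: ring RFo by (rule ring_RFo)
  let ?e = "o_class recip_Suc"
  have e: "?e \<in> carrier RFo"
    using Bseq_recip_Suc by (auto simp: carrier_RFo)
  have nonzero: "?e \<noteq> \<zero>\<^bsub>RFo\<^esub>"
    using recip_Suc_not_in_o_ideal by (simp add: zero_RFo o_class_eq_iff)
  have square: "?e \<otimes>\<^bsub>RFo\<^esub> ?e = \<zero>\<^bsub>RFo\<^esub>"
    using recip_Suc_squared_in_o_ideal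
    by (simp add: mult_RFo[OF Bseq_recip_Suc Bseq_recip_Suc] zero_RFo o_class_eq_iff)
  have "?e [^]\<^bsub>RFo\<^esub> (2::nat) = ?e \<otimes>\<^bsub>RFo\<^esub> ?e"
    using e by (simp add: numeral_2_eq_2)
  with square have "?e [^]\<^bsub>RFo\<^esub> (2::nat) = \<zero>\<^bsub>RFo\<^esub>"
    by simp
  then show ?thesis
    using partially_ordered_ring_RFo infinitesimal_o_recip_Suc e nonzero square by blast
qed

end
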